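(* Let $Y=\{(x,y)\in\mathbb{R}^2:(x/a)^2+y^2=1\}$ with $1<a\le\sqrt2$, and let $p\in Y$. The only local extrema of $d_p:Y\to\mathbb{R}$, $d_p(q)=d(p,q)$, are a global minimum at $p$ and a global maximum at $h^{-1}(p)$. Consequently, every nonempty intersection of $Y$ with a Euclidean ball centered at a point of $Y$ is either contractible or all of $Y$.
   Context: $d$ is the Euclidean metric on $\mathbb{R}^2$. $h:Y\to Y$ sends $p$ to the unique point of the intersection of the normal line to $Y$ at $p$ with $Y\setminus\{p\}$; for $1<a\le\sqrt2$ this map is a bijection, and $h^{-1}$ denotes its inverse. *)

theory Defs
  imports "HOL-Analysis.Analysis"
begin

text \<open>The ellipse Y = {(x,y). (x/a)^2 + y^2 = 1} in R^2 = real \<times> real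
  (the product metric on real \<times> real is the Euclidean metric).\<close>
definition ellipse :: "real \<Rightarrow> (real \<times> real) set" where
  "ellipse a = {(x, y). (x / a)^2 + y^2 = 1}"

text \<open>Normal line to the ellipse at p = (x,y): direction is the gradient
  of (x/a)^2 + y^2, i.e. proportional to (x/a^2, y).\<close>
definition normal_line :: "real \<Rightarrow> real \<times> real \<Rightarrow> (real \<times> real) set" where
  "normal_line a p = {(fst p + t * (fst p / a^2), snd p + t * snd p) | t. True}"

definition ell_h :: "real \<Rightarrow> real \<times> real \<Rightarrow> real \<times> real" where
  "ell_h a p = (THE q. q \<in> ellipse a \<and> q \<noteq> p \<and> q \<in> normal_line a p)"

definition ell_hinv :: "real \<Rightarrow> real \<times> real \<Rightarrow> real \<times> real" where
  "ell_hinv a = inv_into (ellipse a) (ell_h a)"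

definition local_min_on :: "'a::metric_space set \<Rightarrow> ('a \<Rightarrow> real) \<Rightarrow> 'a \<Rightarrow> bool" where
  "local_min_on S f q \<longleftrightarrow> q \<in> S \<and> (\<exists>e>0. \<forall>q'\<in>S. dist q' q < e \<longrightarrow> f q \<le> f q')"

definition local_max_on :: "'a::metric_space set \<Rightarrow> ('a \<Rightarrow> real) \<Rightarrow> 'a \<Rightarrow> bool" where
  "local_max_on S f q \<longleftrightarrow> q \<in> S \<and> (\<exists>e>0. \<forall>q'\<in>S. dist q' q < e \<longrightarrow> f q' \<le> f q)"

end

theory Submission
  imports Defs
begin

text \<open>
  Write p = (a cos u, sin u) and run through Y as Q v = (a cos (u + 2v), sin (u + 2v)),
  0 \<le> v < pi, so that Q 0 = p. The squared distance d(p, Q v)^2 has derivative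
  4 sin v K(v) with K(v) = (a^2 + 1) cos v - (a^2 - 1) cos (2u + 3v) = chord_factor a u v,
  and the normal line at Q v passes through p exactly when sin v K(v) = 0.
  Since K(0) > 0 > K(pi) and, for a^2 \<le> 2 and apart from one explicit degenerate case,
  K has negative derivative at each of its zeros in (0, pi), it changes sign exactly once,
  at some z. Hence d_p increases on [0, z] and decreases on [z, pi]: its only local
  minimum is p and its only local maximum is Q z, the unique point whose normal passes
  through p, i.e. h^-1(p). A sublevel set of d_p is therefore all of Y or a connected arc
  missing Q z, and Y minus a point is homeomorphic to the real line.
\<close>

lemma negative_persists_through_down_crossings:
  fixes k k' :: "real \<Rightarrow> real"
  assumes der: "\<And>v. (k has_real_derivative k' v) (at v)"
    and down: "\<And>v. x < v \<Longrightarrow> v \<le> y \<Longrightarrow> k v = 0 \<Longrightarrow> k' v < 0"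
    and "x \<le> y" and "k x < 0"
  shows "k y < 0"
proof (rule ccontr)
  assume "\<not> k y < 0"
  have cont: "continuous_on A k" for A
    using der by (meson DERIV_isCont continuous_at_imp_continuous_on)
  define N where "N = {t. x \<le> t \<and> t \<le> y \<and> 0 \<le> k t}"
  have "y \<in> N" using \<open>\<not> k y < 0\<close> \<open>x \<le> y\<close> by (simp add: N_def)
  moreover have "bdd_below N" unfolding N_def by (rule bdd_belowI[of _ x]) auto
  moreover have "closed N" unfolding N_def
    by (intro closed_Collect_conj closed_Collect_le cont continuous_intros)
  ultimately have "Inf N \<in> N" using closed_contains_Inf by blast
  define t0 where "t0 = Inf N"
  have t0: "x \<le> t0" "t0 \<le> y" "0 \<le> k t0" using \<open>Inf N \<in> N\<close> by (auto simp: N_def t0_def)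
  have below: "k t < 0" if "x \<le> t" "t < t0" for t
  proof (rule ccontr)
    assume "\<not> k t < 0"
    with that t0 have "t \<in> N" by (simp add: N_def)
    then have "t0 \<le> t" unfolding t0_def using \<open>bdd_below N\<close> by (rule cInf_lower)
    with that show False by simp
  qed
  have "x < t0" using t0 \<open>k x < 0\<close> by (auto simp: less_eq_real_def)
  have "k t0 = 0"
  proof (rule ccontr)
    assume "k t0 \<noteq> 0"
    then obtain t1 where "x \<le> t1" "t1 \<le> t0" "k t1 = 0"
      using IVT'[of k x 0 t0] \<open>k x < 0\<close> \<open>x < t0\<close> t0 cont by force
    moreover have "t1 \<noteq> t0" using \<open>k t0 \<noteq> 0\<close> \<open>k t1 = 0\<close> by auto
    ultimately show False using below[of t1] by simp
  qed
  then have "k' t0 < 0" using down \<open>x < t0\<close> t0 by simp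
  then obtain d where "d > 0" and d: "\<And>h. 0 < h \<Longrightarrow> h < d \<Longrightarrow> k t0 < k (t0 - h)"
    using DERIV_neg_dec_left[OF der] by metis
  have "0 < min d (t0 - x)" using \<open>d > 0\<close> \<open>x < t0\<close> by simp
  then obtain h where "0 < h" "h < min d (t0 - x)" using dense by blast
  then have "k t0 < k (t0 - h)" "k (t0 - h) < 0" using d[of h] below[of "t0 - h"] by simp_all
  with \<open>k t0 = 0\<close> show False by simp
qed

lemma unique_down_crossing:
  fixes k k' :: "real \<Rightarrow> real"
  assumes der: "\<And>v. (k has_real_derivative k' v) (at v)"
    and down: "\<And>v. 0 < v \<Longrightarrow> v < L \<Longrightarrow> k v = 0 \<Longrightarrow> k' v < 0"
    and "k 0 > 0" and "k L < 0" and "0 < L"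
  obtains z where "0 < z" "z < L" "k z = 0"
    "\<And>v. 0 \<le> v \<Longrightarrow> v < z \<Longrightarrow> k v > 0" "\<And>v. z < v \<Longrightarrow> v \<le> L \<Longrightarrow> k v < 0"
proof -
  have cont: "continuous_on A k" for A
    using der by (meson DERIV_isCont continuous_at_imp_continuous_on)
  have down': "k' v < 0" if "0 < v" "v \<le> L" "k v = 0" for v
    using down that \<open>k L < 0\<close> by (cases "v = L") auto
  have negative_after_zero: "k y < 0" if "0 < x" "x < y" "y \<le> L" "k x = 0" for x y
  proof -
    have "k' x < 0" using down' that by simp
    then obtain d where "d > 0" and d: "\<And>h. 0 < h \<Longrightarrow> h < d \<Longrightarrow> k (x + h) < k x"
      using DERIV_neg_dec_right[OF der] by metis
    have "0 < min d (y - x)" using \<open>d > 0\<close> \<open>x < y\<close> by simp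
    then obtain h where "0 < h" "h < min d (y - x)" using dense by blast
    then have neg: "k (x + h) < 0" and le: "x + h \<le> y" using d[of h] \<open>k x = 0\<close> by simp_all
    have "k' v < 0" if "x + h < v" "v \<le> y" "k v = 0" for v
      using down' that \<open>0 < x\<close> \<open>0 < h\<close> \<open>y \<le> L\<close> by simp
    then show ?thesis using negative_persists_through_down_crossings[OF der _ le neg] by simp
  qed
  obtain z where "0 \<le> z" "z \<le> L" "k z = 0"
    using IVT2'[of k L 0 0] \<open>k 0 > 0\<close> \<open>k L < 0\<close> \<open>0 < L\<close> cont by auto
  then have "0 < z" "z < L" using \<open>k 0 > 0\<close> \<open>k L < 0\<close> by (auto simp: less_eq_real_def)
  show ?thesis
  proof (rule that[OF \<open>0 < z\<close> \<open>z < L\<close> \<open>k z = 0\<close>])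
    show "k v > 0" if "0 \<le> v" "v < z" for v
    proof (rule ccontr)
      assume "\<not> k v > 0"
      then consider "k v < 0" | "k v = 0" by linarith
      then have "k z < 0"
      proof cases
        case 1
        have "k' w < 0" if "v < w" "w \<le> z" "k w = 0" for w
          using down' \<open>0 \<le> v\<close> \<open>z < L\<close> that by simp
        then show ?thesis
          using negative_persists_through_down_crossings[OF der _ less_imp_le[OF \<open>v < z\<close>] 1] by simp
      next
        case 2
        with \<open>k 0 > 0\<close> have "0 < v" using \<open>0 \<le> v\<close> by (cases "v = 0") simp_all
        then show ?thesis
          using negative_after_zero[of v z] that 2 \<open>z < L\<close> by simp
      qed
      with \<open>k z = 0\<close> show False by simp
    qed
    show "k v < 0" if "z < v" "v \<le> L" for v
      using negative_after_zero[of z v] that \<open>0 < z\<close> \<open>k z = 0\<close> by simp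
  qed
qed

definition chord_factor :: "real \<Rightarrow> real \<Rightarrow> real \<Rightarrow> real" where
  "chord_factor a u v = (a^2 + 1) * cos v - (a^2 - 1) * cos (2 * u + 3 * v)"

lemma has_real_derivative_chord_factor:
  "(chord_factor a u has_real_derivative 3 * (a^2 - 1) * sin (2 * u + 3 * v) - (a^2 + 1) * sin v) (at v)"
  unfolding chord_factor_def[abs_def]
  by (auto intro!: derivative_eq_intros simp: algebra_simps)

lemma sine_gap_if_cosines_balance:
  fixes B v w :: real
  assumes "B * cos w = (B + 2) * cos v"
  shows "((B + 2) * sin v)^2 - (3 * B * sin w)^2
    = (2 - 2 * B) * (2 + 4 * B) + 8 * (B + 2)^2 * cos v ^ 2"
proof -
  have "(3 * B * sin w)^2 = 9 * B^2 - 9 * (B * cos w)^2"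
    using sin_cos_squared_add[of w] by algebra
  then show ?thesis
    unfolding assms using sin_squared_eq[of v] by algebra
qed

lemma chord_factor_zero_imp_deriv_neg:
  assumes "1 < a" and "a^2 \<le> 2" and nondegenerate: "\<not> (a^2 = 2 \<and> cos (2 * u) = -1)"
    and "0 < v" and "v < pi" and zero: "chord_factor a u v = 0"
  shows "3 * (a^2 - 1) * sin (2 * u + 3 * v) - (a^2 + 1) * sin v < 0"
proof -
  define A B w where "A = a^2 + 1" and "B = a^2 - 1" and "w = 2 * u + 3 * v"
  have "0 < B" "B \<le> 1" "A = B + 2"
    using \<open>a^2 \<le> 2\<close> \<open>1 < a\<close> by (auto simp: A_def B_def one_less_power)
  have "sin v > 0" using \<open>0 < v\<close> \<open>v < pi\<close> by (rule sin_gt_zero)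
  have eq: "B * cos w = A * cos v" using zero by (simp add: chord_factor_def A_def B_def w_def)
  have "3 * B * sin w < A * sin v"
  proof (cases "sin w \<le> 0")
    case True
    then have "B * sin w \<le> 0" using \<open>0 < B\<close> by (simp add: mult_nonneg_nonpos)
    moreover have "A * sin v > 0" using \<open>sin v > 0\<close> \<open>A = B + 2\<close> \<open>0 < B\<close> by simp
    ultimately show ?thesis by linarith
  next
    case False
    \<comment> \<open>Both sides are positive, so compare squares; the balance of cosines at a zero
        of the chord factor turns the difference into a manifestly nonnegative expression.\<close>
    have "(A * sin v)^2 - (3 * B * sin w)^2 = (2 - 2 * B) * (2 + 4 * B) + 8 * A^2 * cos v ^ 2"
      using eq unfolding \<open>A = B + 2\<close> by (rule sine_gap_if_cosines_balance)
    moreover have "(2 - 2 * B) * (2 + 4 * B) + 8 * A^2 * cos v ^ 2 > 0"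
    proof (cases "B = 1")
      case False
      then have "(2 - 2 * B) * (2 + 4 * B) > 0" using \<open>0 < B\<close> \<open>B \<le> 1\<close> by simp
      then show ?thesis by (simp add: add_pos_nonneg)
    next
      case True
      have "cos v \<noteq> 0"
      proof
        assume "cos v = 0"
        then have "sin v = 1" "cos w = 0"
          using \<open>sin v > 0\<close> eq \<open>B = 1\<close> sin_cos_squared_add[of v] by (auto simp: power2_eq_1_iff)
        then have "sin w = 1" using False sin_cos_squared_add[of w] by (auto simp: power2_eq_1_iff)
        moreover have "sin (3 * v) = -1"
        proof -
          have "sin (3 * v) = sin (2 * v) * cos v + cos (2 * v) * sin v"
            using sin_add[of "2 * v" v] by simp
          then show ?thesis using \<open>cos v = 0\<close> \<open>sin v = 1\<close> by (simp add: cos_double)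
        qed
        then have "sin w = - cos (2 * u)"
          using \<open>cos v = 0\<close> by (simp add: w_def sin_add cos_treble_cos)
        ultimately show False using nondegenerate True by (simp add: B_def)
      qed
      then show ?thesis using True \<open>A = B + 2\<close> by simp
    qed
    ultimately have "(3 * B * sin w)^2 < (A * sin v)^2" by linarith
    then show ?thesis
      by (rule power2_less_imp_less) (use \<open>sin v > 0\<close> \<open>A = B + 2\<close> \<open>0 < B\<close> in simp)
  qed
  then show ?thesis by (simp add: A_def B_def w_def)
qed

lemma chord_factor_sign_change:
  assumes "1 < a" and "a^2 \<le> 2"
  obtains z where "0 < z" "z < pi" "chord_factor a u z = 0"
    "\<And>v. 0 \<le> v \<Longrightarrow> v < z \<Longrightarrow> chord_factor a u v > 0"
    "\<And>v. z < v \<Longrightarrow> v \<le> pi \<Longrightarrow> chord_factor a u v < 0"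
proof (cases "a^2 = 2 \<and> cos (2 * u) = -1")
  case True
  \<comment> \<open>Here the derivative vanishes at the zero pi/2, so the crossing lemma does not apply.\<close>
  then have "sin (2 * u) = 0" using sin_cos_squared_add[of "2 * u"] by simp
  with True have K: "chord_factor a u v = 4 * cos v ^ 3" for v
    by (simp add: chord_factor_def cos_add cos_treble_cos)
  show ?thesis
  proof (rule that[of "pi / 2"])
    show "chord_factor a u v > 0" if "0 \<le> v" "v < pi / 2" for v
      using cos_gt_zero_pi[of v] that by (simp add: K)
    show "chord_factor a u v < 0" if "pi / 2 < v" "v \<le> pi" for v
      using cos_lt_zero_pi[of v] that by (simp add: K power_less_zero_eq)
  qed (simp_all add: K)
next
  case False
  have "(a^2 - 1) * cos (2 * u) \<le> a^2 - 1"
    using \<open>1 < a\<close> mult_left_le[of "cos (2 * u)" "a^2 - 1"] by (simp add: one_less_power)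
  then have "chord_factor a u 0 > 0" "chord_factor a u pi < 0"
    by (simp_all add: chord_factor_def cos_add)
  then show ?thesis
    using unique_down_crossing[OF has_real_derivative_chord_factor
        chord_factor_zero_imp_deriv_neg[OF assms False]] pi_gt_zero that
    by blast
qed

definition ell_point :: "real \<Rightarrow> real \<Rightarrow> real \<times> real" where
  "ell_point a t = (a * cos t, sin t)"

lemma ell_point_in_ellipse: "a \<noteq> 0 \<Longrightarrow> ell_point a t \<in> ellipse a"
  by (simp add: ell_point_def ellipse_def)

lemma ellipse_ell_point_total:
  assumes "a \<noteq> 0" and "q \<in> ellipse a"
  obtains \<theta> where "0 \<le> \<theta>" "\<theta> < 2 * pi" "q = ell_point a (u + \<theta>)"
proof -
  obtain x y where q: "q = (x, y)" and "(x / a)^2 + y^2 = 1"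
    using \<open>q \<in> ellipse a\<close> by (auto simp: ellipse_def)
  then obtain t where t: "x / a = cos t" "y = sin t"
    using sincos_total_2pi by metis
  obtain \<theta> where "0 \<le> \<theta>" "\<theta> < 2 * pi" "cos (t - u) = cos \<theta>" "sin (t - u) = sin \<theta>"
    using sincos_total_2pi[OF sin_cos_squared_add2[of "t - u"]] by metis
  moreover have "cos (u + (t - u)) = cos t" "sin (u + (t - u)) = sin t" by simp_all
  ultimately have "cos (u + \<theta>) = cos t" "sin (u + \<theta>) = sin t"
    unfolding cos_add sin_add by simp_all
  with t q \<open>a \<noteq> 0\<close> have "q = ell_point a (u + \<theta>)" by (simp add: ell_point_def field_simps)
  with \<open>0 \<le> \<theta>\<close> \<open>\<theta> < 2 * pi\<close> show ?thesis by (rule that)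
qed

lemma ell_point_in_normal_line_iff:
  assumes "a \<noteq> 0"
  shows "ell_point a u \<in> normal_line a (ell_point a t) \<longleftrightarrow>
         a * (a * cos u - a * cos t) * sin t - (sin u - sin t) * cos t = 0"
proof
  assume "ell_point a u \<in> normal_line a (ell_point a t)"
  then obtain s where "a * cos u = a * cos t + s * (a * cos t / a^2)" "sin u = sin t + s * sin t"
    by (auto simp: normal_line_def ell_point_def)
  then have "a * (a * cos u - a * cos t) = s * cos t" "sin u - sin t = s * sin t"
    using assms by (simp_all add: field_simps power2_eq_square)
  then show "a * (a * cos u - a * cos t) * sin t - (sin u - sin t) * cos t = 0" by simp
next
  assume crit: "a * (a * cos u - a * cos t) * sin t - (sin u - sin t) * cos t = 0"
  \<comment> \<open>crit says that (a (a cos u - a cos t), sin u - sin t) is parallel to the unit vector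
      (cos t, sin t); s is its signed length.\<close>
  define s where "s = a * (a * cos u - a * cos t) * cos t + (sin u - sin t) * sin t"
  have "s * cos t = a * (a * cos u - a * cos t)" "s * sin t = sin u - sin t"
    unfolding s_def using crit sin_cos_squared_add[of t] by algebra+
  then have "a * cos u = a * cos t + s * (a * cos t / a^2)" "sin u = sin t + s * sin t"
    using assms by (simp_all add: field_simps power2_eq_square)
  then show "ell_point a u \<in> normal_line a (ell_point a t)"
    by (auto simp: normal_line_def ell_point_def)
qed

lemma normal_defect_chord_factor:
  "a * (a * cos u - a * cos (u + 2 * v)) * sin (u + 2 * v) - (sin u - sin (u + 2 * v)) * cos (u + 2 * v)
     = sin v * chord_factor a u v"
proof -
  have e1: "cos (u + 2 * v) = cos u * (cos v ^ 2 - sin v ^ 2) - sin u * (2 * sin v * cos v)"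
    by (simp add: cos_add cos_double sin_double)
  have e2: "sin (u + 2 * v) = sin u * (cos v ^ 2 - sin v ^ 2) + cos u * (2 * sin v * cos v)"
    by (simp add: sin_add cos_double sin_double)
  have e3: "cos (2 * u + 3 * v) = cos (u + 2 * v) * cos (u + v) - sin (u + 2 * v) * sin (u + v)"
    using cos_add[of "u + 2 * v" "u + v"] by (simp add: algebra_simps)
  show ?thesis
    unfolding chord_factor_def e3 cos_add[of u v] sin_add[of u v] e1 e2
    using sin_cos_squared_add[of u] sin_cos_squared_add[of v] by algebra
qed

lemma ell_point_in_normal_line_iff_chord_factor:
  "a \<noteq> 0 \<Longrightarrow> ell_point a u \<in> normal_line a (ell_point a (u + 2 * v)) \<longleftrightarrow> sin v * chord_factor a u v = 0"
  by (simp add: ell_point_in_normal_line_iff normal_defect_chord_factor)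

lemma has_real_derivative_chord_squared:
  "((\<lambda>v. (dist (ell_point a u) (ell_point a (u + 2 * v)))^2)
     has_real_derivative 4 * sin v * chord_factor a u v) (at v)"
proof -
  have eq: "(\<lambda>v. (dist (ell_point a u) (ell_point a (u + 2 * v)))^2)
      = (\<lambda>v. (a * cos u - a * cos (u + 2 * v))^2 + (sin u - sin (u + 2 * v))^2)"
    by (simp add: ell_point_def dist_Pair_Pair dist_real_def)
  have "((\<lambda>v. (a * cos u - a * cos (u + 2 * v))^2 + (sin u - sin (u + 2 * v))^2)
      has_real_derivative 4 * (a * (a * cos u - a * cos (u + 2 * v)) * sin (u + 2 * v)
        - (sin u - sin (u + 2 * v)) * cos (u + 2 * v))) (at v)"
    by (auto intro!: derivative_eq_intros simp: algebra_simps)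
  then show ?thesis unfolding eq normal_defect_chord_factor by (simp only: mult.assoc)
qed

lemma normal_line_meets_ellipse_once:
  assumes "a \<noteq> 0" and "x \<in> ellipse a"
  shows "\<exists>!q. q \<in> ellipse a \<and> q \<noteq> x \<and> q \<in> normal_line a x"
proof -
  obtain X Y where x: "x = (X, Y)" by (cases x)
  define A B c where "A = (X / a)^2" and "B = Y^2" and "c = 1 / a^2"
  define N where "N s = (X + s * (X / a^2), Y + s * Y)" for s
  have "A + B = 1" using \<open>x \<in> ellipse a\<close> by (simp add: ellipse_def x A_def B_def)
  have "A \<ge> 0" "B \<ge> 0" "c > 0" using \<open>a \<noteq> 0\<close> by (simp_all add: A_def B_def c_def)
  have normal: "q \<in> normal_line a x \<longleftrightarrow> (\<exists>s. q = N s)" for q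
    by (auto simp: normal_line_def x N_def)
  \<comment> \<open>Substituting the normal line into the equation of the ellipse gives a quadratic in s
      with the root s = 0 (the point x itself) and exactly one further root s0.\<close>
  have on_ellipse: "N s \<in> ellipse a \<longleftrightarrow> s * (s * (A * c^2 + B) + 2 * (A * c + B)) = 0" for s
  proof -
    have "N s \<in> ellipse a \<longleftrightarrow> A * (1 + s * c)^2 + B * (1 + s)^2 = 1"
      using \<open>a \<noteq> 0\<close> by (simp add: ellipse_def N_def A_def B_def c_def field_simps power2_eq_square)
    also have "\<dots> \<longleftrightarrow> s * (s * (A * c^2 + B) + 2 * (A * c + B)) = 0"
    proof -
      have "A * (1 + s * c)^2 + B * (1 + s)^2 - 1 = s * (s * (A * c^2 + B) + 2 * (A * c + B))"
        using \<open>A + B = 1\<close> by algebra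
      then show ?thesis by linarith
    qed
    finally show ?thesis .
  qed
  have N_eq_x: "N s = x \<longleftrightarrow> s = 0" for s
    using \<open>a \<noteq> 0\<close> \<open>A + B = 1\<close> by (auto simp: N_def x A_def B_def)
  have "A * c^2 + B > 0" "A * c + B > 0"
    using \<open>A + B = 1\<close> \<open>A \<ge> 0\<close> \<open>B \<ge> 0\<close> \<open>c > 0\<close>
    by (cases "A = 0"; simp add: add_pos_nonneg)+
  define s0 where "s0 = - 2 * (A * c + B) / (A * c^2 + B)"
  have "s * (A * c^2 + B) + 2 * (A * c + B) = 0 \<longleftrightarrow> s = s0" for s
    using \<open>A * c^2 + B > 0\<close> by (auto simp: s0_def eq_divide_eq)
  moreover have "s0 \<noteq> 0" using \<open>A * c^2 + B > 0\<close> \<open>A * c + B > 0\<close> by (simp add: s0_def)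
  ultimately have root: "s \<noteq> 0 \<and> N s \<in> ellipse a \<longleftrightarrow> s = s0" for s
    by (auto simp: on_ellipse)
  show ?thesis
  proof (rule ex1I[of _ "N s0"])
    show "N s0 \<in> ellipse a \<and> N s0 \<noteq> x \<and> N s0 \<in> normal_line a x"
      using root[of s0] N_eq_x normal by blast
    show "q = N s0" if q: "q \<in> ellipse a \<and> q \<noteq> x \<and> q \<in> normal_line a x" for q
    proof -
      obtain s where "q = N s" using q normal by blast
      with q have "s \<noteq> 0 \<and> N s \<in> ellipse a" using N_eq_x by auto
      then show ?thesis using root \<open>q = N s\<close> by simp
    qed
  qed
qed

lemma ell_hinv_eqI:
  assumes "a \<noteq> 0" and "p \<in> ellipse a" and "q \<in> ellipse a" and "q \<noteq> p"
    and "p \<in> normal_line a q"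
    and unique: "\<And>x. x \<in> ellipse a \<Longrightarrow> x \<noteq> p \<Longrightarrow> p \<in> normal_line a x \<Longrightarrow> x = q"
  shows "ell_hinv a p = q"
proof -
  have h_spec: "ell_h a x \<in> ellipse a \<and> ell_h a x \<noteq> x \<and> ell_h a x \<in> normal_line a x"
    if "x \<in> ellipse a" for x
    unfolding ell_h_def by (rule theI'[OF normal_line_meets_ellipse_once[OF \<open>a \<noteq> 0\<close> that]])
  have hq: "ell_h a q = p"
    unfolding ell_h_def
    by (rule the1_equality[OF normal_line_meets_ellipse_once[OF \<open>a \<noteq> 0\<close> \<open>q \<in> ellipse a\<close>]])
       (use \<open>p \<in> ellipse a\<close> \<open>q \<noteq> p\<close> \<open>p \<in> normal_line a q\<close> in auto)
  have preimage: "x = q" if "x \<in> ellipse a" "ell_h a x = p" for x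
    using unique[OF that(1)] h_spec[OF that(1)] that(2) by auto
  show ?thesis
    unfolding ell_hinv_def inv_into_def
    by (rule some_equality) (use \<open>q \<in> ellipse a\<close> hq preimage in blast)+
qed

locale unimodal_loop =
  fixes Q :: "real \<Rightarrow> 'a::metric_space" and f :: "'a \<Rightarrow> real" and S :: "'a set" and T z :: real
  assumes continuous: "continuous_on UNIV Q"
    and periodic: "\<And>v. Q (v + T) = Q v"
    and image: "Q ` {0..<T} = S"
    and peak: "0 < z" "z < T"
    and increasing: "\<And>x y. 0 \<le> x \<Longrightarrow> x < y \<Longrightarrow> y \<le> z \<Longrightarrow> f (Q x) < f (Q y)"
    and decreasing: "\<And>x y. z \<le> x \<Longrightarrow> x < y \<Longrightarrow> y \<le> T \<Longrightarrow> f (Q y) < f (Q x)"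
begin

lemma Q_in_S: "0 \<le> v \<Longrightarrow> v \<le> T \<Longrightarrow> Q v \<in> S"
  using image periodic[of 0] peak by (cases "v = T") force+

lemma obtain_parameter:
  assumes "q \<in> S"
  obtains v where "0 \<le> v" "v < T" "q = Q v"
  using assms image by force

lemma increasing_le: "0 \<le> x \<Longrightarrow> x \<le> y \<Longrightarrow> y \<le> z \<Longrightarrow> f (Q x) \<le> f (Q y)"
  using increasing[of x y] by (cases "x = y") auto

lemma decreasing_le: "z \<le> x \<Longrightarrow> x \<le> y \<Longrightarrow> y \<le> T \<Longrightarrow> f (Q y) \<le> f (Q x)"
  using decreasing[of x y] by (cases "x = y") auto

lemma greater_than_start: "0 < v \<Longrightarrow> v < T \<Longrightarrow> f (Q 0) < f (Q v)"
  using increasing[of 0 v] decreasing[of v T] periodic[of 0] by (cases "v \<le> z") auto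

lemma less_than_peak: "0 \<le> v \<Longrightarrow> v \<le> T \<Longrightarrow> v \<noteq> z \<Longrightarrow> f (Q v) < f (Q z)"
  using increasing[of v z] decreasing[of z v] by (cases "v < z") auto

lemma start_le: "q \<in> S \<Longrightarrow> f (Q 0) \<le> f q"
  by (metis obtain_parameter greater_than_start order.order_iff_strict)

lemma le_peak: "q \<in> S \<Longrightarrow> f q \<le> f (Q z)"
  by (metis obtain_parameter less_than_peak less_imp_le order.refl)

lemma not_local_min_on:
  assumes descent: "\<And>d. 0 < d \<Longrightarrow> \<exists>w. dist w v < d \<and> Q w \<in> S \<and> f (Q w) < f (Q v)"
  shows "\<not> local_min_on S f (Q v)"
proof
  assume "local_min_on S f (Q v)"
  then obtain e where "e > 0" and min: "\<And>q. q \<in> S \<Longrightarrow> dist q (Q v) < e \<Longrightarrow> f (Q v) \<le> f q"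
    by (auto simp: local_min_on_def)
  obtain d where "d > 0" and near: "\<And>w. dist w v < d \<Longrightarrow> dist (Q w) (Q v) < e"
    using continuous \<open>e > 0\<close> by (metis continuous_on_eq_continuous_at continuous_at_eps_delta open_UNIV UNIV_I)
  obtain w where "dist w v < d" "Q w \<in> S" "f (Q w) < f (Q v)" using descent \<open>d > 0\<close> by blast
  with min[of "Q w"] near[of w] show False by simp
qed

lemma not_local_max_on:
  assumes ascent: "\<And>d. 0 < d \<Longrightarrow> \<exists>w. dist w v < d \<and> Q w \<in> S \<and> f (Q v) < f (Q w)"
  shows "\<not> local_max_on S f (Q v)"
proof
  assume "local_max_on S f (Q v)"
  then obtain e where "e > 0" and max: "\<And>q. q \<in> S \<Longrightarrow> dist q (Q v) < e \<Longrightarrow> f q \<le> f (Q v)"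
    by (auto simp: local_max_on_def)
  obtain d where "d > 0" and near: "\<And>w. dist w v < d \<Longrightarrow> dist (Q w) (Q v) < e"
    using continuous \<open>e > 0\<close> by (metis continuous_on_eq_continuous_at continuous_at_eps_delta open_UNIV UNIV_I)
  obtain w where "dist w v < d" "Q w \<in> S" "f (Q v) < f (Q w)" using ascent \<open>d > 0\<close> by blast
  with max[of "Q w"] near[of w] show False by simp
qed

lemma local_min_on_iff:
  assumes "q \<in> S"
  shows "local_min_on S f q \<longleftrightarrow> q = Q 0"
proof
  show "local_min_on S f q" if "q = Q 0"
    using that assms start_le unfolding local_min_on_def by (intro conjI exI[of _ 1]) auto
next
  assume min: "local_min_on S f q"
  obtain v where "0 \<le> v" "v < T" "q = Q v" using assms by (rule obtain_parameter)
  show "q = Q 0"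
  proof (cases "v = 0")
    case False
    have "\<exists>w. dist w v < d \<and> Q w \<in> S \<and> f (Q w) < f (Q v)" if "0 < d" for d
    proof (cases "v \<le> z")
      case True
      have "max 0 (v - d) < v" using \<open>0 \<le> v\<close> \<open>v \<noteq> 0\<close> \<open>0 < d\<close> by simp
      then obtain w where "max 0 (v - d) < w" "w < v" using dense by blast
      then show ?thesis
        using increasing[of w v] Q_in_S[of w] True \<open>v < T\<close> by (intro exI[of _ w]) (auto simp: dist_real_def)
    next
      case False
      have "v < min T (v + d)" using \<open>v < T\<close> \<open>0 < d\<close> by simp
      then obtain w where "v < w" "w < min T (v + d)" using dense by blast
      then show ?thesis
        using decreasing[of v w] Q_in_S[of w] False \<open>0 \<le> v\<close> by (intro exI[of _ w]) (auto simp: dist_real_def)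
    qed
    then show ?thesis using not_local_min_on min \<open>q = Q v\<close> by blast
  qed (use \<open>q = Q v\<close> in simp)
qed

lemma local_max_on_iff:
  assumes "q \<in> S"
  shows "local_max_on S f q \<longleftrightarrow> q = Q z"
proof
  show "local_max_on S f q" if "q = Q z"
    using that assms le_peak unfolding local_max_on_def by (intro conjI exI[of _ 1]) auto
next
  assume max: "local_max_on S f q"
  obtain v where "0 \<le> v" "v < T" "q = Q v" using assms by (rule obtain_parameter)
  show "q = Q z"
  proof (cases "v = z")
    case False
    have "\<exists>w. dist w v < d \<and> Q w \<in> S \<and> f (Q v) < f (Q w)" if "0 < d" for d
    proof (cases "v < z")
      case True
      have "v < min z (v + d)" using True \<open>0 < d\<close> by simp
      then obtain w where "v < w" "w < min z (v + d)" using dense by blast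
      then show ?thesis
        using increasing[of v w] Q_in_S[of w] \<open>0 \<le> v\<close> peak by (intro exI[of _ w]) (auto simp: dist_real_def)
    next
      case False
      with \<open>v \<noteq> z\<close> have "z < v" by simp
      have "max z (v - d) < v" using \<open>z < v\<close> \<open>0 < d\<close> by simp
      then obtain w where "max z (v - d) < w" "w < v" using dense by blast
      then show ?thesis
        using decreasing[of w v] Q_in_S[of w] \<open>v < T\<close> peak by (intro exI[of _ w]) (auto simp: dist_real_def)
    qed
    then show ?thesis using not_local_max_on max \<open>q = Q v\<close> by blast
  qed (use \<open>q = Q v\<close> in simp)
qed

lemma sublevel_connected:
  assumes down_closed: "\<And>s t. s \<le> t \<Longrightarrow> P t \<Longrightarrow> P s"
  shows "{q \<in> S. P (f q)} = S \<or> connected {q \<in> S. P (f q)} \<and> Q z \<notin> {q \<in> S. P (f q)}"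
proof (cases "P (f (Q z))")
  case True
  then show ?thesis using down_closed le_peak by blast
next
  case False
  \<comment> \<open>Over the period [z - T, z] the function f \<circ> Q first decreases and then increases,
      so its sublevel sets there are intervals.\<close>
  define J where "J = {v. z - T \<le> v \<and> v \<le> z \<and> P (f (Q v))}"
  have shift: "Q (v - T) = Q v" for v using periodic[of "v - T"] by simp
  have image_J: "{q \<in> S. P (f q)} = Q ` J"
  proof
    show "{q \<in> S. P (f q)} \<subseteq> Q ` J"
    proof
      fix q assume q: "q \<in> {q \<in> S. P (f q)}"
      then obtain v where v: "0 \<le> v" "v < T" "q = Q v" using obtain_parameter by blast
      show "q \<in> Q ` J"
      proof (cases "v \<le> z")
        case True
        with v q peak have "v \<in> J" by (auto simp: J_def)
        with v show ?thesis by blast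
      next
        case False
        with v q peak have "v - T \<in> J" by (auto simp: J_def shift)
        with v shift show ?thesis by (metis image_eqI)
      qed
    qed
    show "Q ` J \<subseteq> {q \<in> S. P (f q)}"
    proof
      fix q assume "q \<in> Q ` J"
      then obtain v where v: "v \<in> J" "q = Q v" by blast
      have "Q v \<in> S"
      proof (cases "0 \<le> v")
        case True
        then show ?thesis using v peak by (intro Q_in_S) (auto simp: J_def)
      next
        case False
        then have "Q (v + T) \<in> S" using v peak by (intro Q_in_S) (auto simp: J_def)
        then show ?thesis by (simp add: periodic)
      qed
      with v show "q \<in> {q \<in> S. P (f q)}" by (simp add: J_def)
    qed
  qed
  have "is_interval J"
    unfolding is_interval_1
  proof (intro ballI allI impI)
    fix x y t assume "x \<in> J" "y \<in> J" and t: "x \<le> t \<and> t \<le> y"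
    have "P (f (Q t))"
    proof (cases "0 \<le> t")
      case True
      then have "f (Q t) \<le> f (Q y)" using increasing_le[of t y] t \<open>y \<in> J\<close> by (simp add: J_def)
      then show ?thesis using down_closed \<open>y \<in> J\<close> by (auto simp: J_def)
    next
      case False
      then have "f (Q (t + T)) \<le> f (Q (x + T))"
        using decreasing_le[of "x + T" "t + T"] t \<open>x \<in> J\<close> by (simp add: J_def)
      then show ?thesis using down_closed \<open>x \<in> J\<close> by (auto simp: J_def periodic)
    qed
    then show "t \<in> J" using \<open>x \<in> J\<close> \<open>y \<in> J\<close> t by (auto simp: J_def)
  qed
  then have "connected J" by (simp add: is_interval_connected_1)
  then have "connected (Q ` J)"
    by (rule connected_continuous_image[OF continuous_on_subset[OF continuous subset_UNIV]])
  moreover have "Q z \<notin> {q \<in> S. P (f q)}" using False by blast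
  ultimately show ?thesis unfolding image_J by blast
qed

end

lemma unimodal_loop_ell_point:
  assumes "a \<noteq> 0" and "0 < z" and "z < pi"
    and pos: "\<And>v. 0 \<le> v \<Longrightarrow> v < z \<Longrightarrow> chord_factor a u v > 0"
    and neg: "\<And>v. z < v \<Longrightarrow> v \<le> pi \<Longrightarrow> chord_factor a u v < 0"
  shows "unimodal_loop (\<lambda>v. ell_point a (u + 2 * v)) (dist (ell_point a u)) (ellipse a) pi z"
proof
  define F where "F v = (dist (ell_point a u) (ell_point a (u + 2 * v)))^2" for v
  have F_deriv: "(F has_real_derivative 4 * sin v * chord_factor a u v) (at v)" for v
    unfolding F_def[abs_def] by (rule has_real_derivative_chord_squared)
  then have F_cont: "continuous_on A F" for A
    by (meson DERIV_isCont continuous_at_imp_continuous_on)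
  have dist_less: "dist (ell_point a u) (ell_point a (u + 2 * x))
      < dist (ell_point a u) (ell_point a (u + 2 * y))" if "F x < F y" for x y
    using that by (simp add: F_def power2_less_imp_less)
  show "continuous_on UNIV (\<lambda>v. ell_point a (u + 2 * v))"
    unfolding ell_point_def by (intro continuous_intros)
  show "ell_point a (u + 2 * (v + pi)) = ell_point a (u + 2 * v)" for v
    using sin_periodic[of "u + 2 * v"] cos_periodic[of "u + 2 * v"]
    by (simp add: ell_point_def algebra_simps)
  show "(\<lambda>v. ell_point a (u + 2 * v)) ` {0..<pi} = ellipse a"
  proof (intro equalityI subsetI)
    fix q assume "q \<in> ellipse a"
    then obtain \<theta> where "0 \<le> \<theta>" "\<theta> < 2 * pi" "q = ell_point a (u + \<theta>)"
      using ellipse_ell_point_total[OF \<open>a \<noteq> 0\<close>] by metis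
    then have "\<theta> / 2 \<in> {0..<pi}" "q = ell_point a (u + 2 * (\<theta> / 2))" by simp_all
    then show "q \<in> (\<lambda>v. ell_point a (u + 2 * v)) ` {0..<pi}" by blast
  qed (use ell_point_in_ellipse[OF \<open>a \<noteq> 0\<close>] in auto)
  show "0 < z" "z < pi" by (fact assms)+
  show "dist (ell_point a u) (ell_point a (u + 2 * x)) < dist (ell_point a u) (ell_point a (u + 2 * y))"
    if "0 \<le> x" "x < y" "y \<le> z" for x y
  proof (rule dist_less, rule DERIV_pos_imp_increasing_open[OF \<open>x < y\<close> _ F_cont])
    fix t assume "x < t" "t < y"
    then have "sin t > 0" "chord_factor a u t > 0"
      using that \<open>z < pi\<close> pos by (auto intro!: sin_gt_zero)
    then show "\<exists>D. (F has_real_derivative D) (at t) \<and> 0 < D"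
      using F_deriv by (intro exI[of _ "4 * sin t * chord_factor a u t"]) simp
  qed
  show "dist (ell_point a u) (ell_point a (u + 2 * y)) < dist (ell_point a u) (ell_point a (u + 2 * x))"
    if "z \<le> x" "x < y" "y \<le> pi" for x y
  proof (rule dist_less, rule DERIV_neg_imp_decreasing_open[OF \<open>x < y\<close> _ F_cont])
    fix t assume "x < t" "t < y"
    then have "sin t > 0" "chord_factor a u t < 0"
      using that \<open>0 < z\<close> neg by (auto intro!: sin_gt_zero)
    then show "\<exists>D. (F has_real_derivative D) (at t) \<and> D < 0"
      using F_deriv by (intro exI[of _ "4 * sin t * chord_factor a u t"]) (simp add: mult_pos_neg)
  qed
qed

lemma ellipse_dist_unimodal:
  assumes "1 < a" and "a^2 \<le> 2" and "p \<in> ellipse a"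
  obtains Q z where "unimodal_loop Q (dist p) (ellipse a) pi z" and "Q 0 = p"
    and "\<And>v. 0 < v \<Longrightarrow> v < pi \<Longrightarrow> p \<in> normal_line a (Q v) \<longleftrightarrow> v = z"
proof -
  have "a \<noteq> 0" using \<open>1 < a\<close> by simp
  obtain u where p: "p = ell_point a u"
    using ellipse_ell_point_total[OF \<open>a \<noteq> 0\<close> \<open>p \<in> ellipse a\<close>, of 0] by auto
  obtain z where z: "0 < z" "z < pi" "chord_factor a u z = 0"
    and pos: "\<And>v. 0 \<le> v \<Longrightarrow> v < z \<Longrightarrow> chord_factor a u v > 0"
    and neg: "\<And>v. z < v \<Longrightarrow> v \<le> pi \<Longrightarrow> chord_factor a u v < 0"
    using chord_factor_sign_change[OF \<open>1 < a\<close> \<open>a^2 \<le> 2\<close>] by metis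
  have "p \<in> normal_line a (ell_point a (u + 2 * v)) \<longleftrightarrow> v = z" if "0 < v" "v < pi" for v
  proof -
    have "sin v > 0" using that by (rule sin_gt_zero)
    moreover have "chord_factor a u v = 0 \<longleftrightarrow> v = z"
      using pos[of v] neg[of v] that z by (cases v z rule: linorder_cases) auto
    ultimately show ?thesis
      by (simp add: p ell_point_in_normal_line_iff_chord_factor[OF \<open>a \<noteq> 0\<close>])
  qed
  with unimodal_loop_ell_point[OF \<open>a \<noteq> 0\<close> z(1,2) pos neg] show ?thesis
    by (intro that[of "\<lambda>v. ell_point a (u + 2 * v)"]) (simp_all add: p)
qed

lemma ell_hinv_eq_peak:
  assumes "a \<noteq> 0" and "unimodal_loop Q (dist p) (ellipse a) pi z" and "Q 0 = p"
    and normal: "\<And>v. 0 < v \<Longrightarrow> v < pi \<Longrightarrow> p \<in> normal_line a (Q v) \<longleftrightarrow> v = z"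
  shows "ell_hinv a p = Q z"
proof -
  interpret unimodal_loop Q "dist p" "ellipse a" pi z by fact
  show ?thesis
  proof (rule ell_hinv_eqI[OF \<open>a \<noteq> 0\<close>])
    show "p \<in> ellipse a" "Q z \<in> ellipse a" using Q_in_S[of 0] Q_in_S[of z] peak \<open>Q 0 = p\<close> by auto
    show "Q z \<noteq> p" using greater_than_start[of z] peak \<open>Q 0 = p\<close> by auto
    show "p \<in> normal_line a (Q z)" using normal[of z] peak by simp
    show "x = Q z" if "x \<in> ellipse a" "x \<noteq> p" "p \<in> normal_line a x" for x
    proof -
      obtain v where "0 \<le> v" "v < pi" "x = Q v" using \<open>x \<in> ellipse a\<close> by (rule obtain_parameter)
      moreover have "v \<noteq> 0" using \<open>x = Q v\<close> \<open>x \<noteq> p\<close> \<open>Q 0 = p\<close> by auto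
      ultimately show ?thesis using normal[of v] \<open>p \<in> normal_line a x\<close> by simp
    qed
  qed
qed

lemma contractible_if_connected_in_line:
  fixes U :: "'a::real_normed_vector set"
  assumes "U homeomorphic (UNIV :: real set)" and "S \<subseteq> U" and "connected S"
  shows "contractible S"
proof -
  obtain f g where fg: "homeomorphism U (UNIV :: real set) f g"
    using assms(1) unfolding homeomorphic_def by blast
  have "homeomorphism S (f ` S) f g"
    by (rule homeomorphism_of_subsets[OF fg \<open>S \<subseteq> U\<close> subset_UNIV refl])
  then have "(f ` S) homeomorphic S" using homeomorphic_def homeomorphic_sym by blast
  moreover have "connected (f ` S)"
    using \<open>connected S\<close> continuous_on_subset[OF homeomorphism_cont1[OF fg] \<open>S \<subseteq> U\<close>]
    by (simp add: connected_continuous_image)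
  then have "contractible (f ` S)" by (simp flip: is_interval_connected_1 is_interval_contractible_1)
  ultimately show ?thesis by (simp add: homeomorphic_contractible_eq)
qed

lemma punctured_ellipse_homeomorphic_line:
  assumes "a \<noteq> 0" and "q \<in> ellipse a"
  shows "(ellipse a - {q}) homeomorphic (UNIV :: real set)"
proof -
  define L :: "real \<times> real \<Rightarrow> real \<times> real" where "L z = (a * fst z, snd z)" for z
  define b where "b = (fst q / a, snd q)"
  have "linear L" by (auto simp: L_def linear_iff algebra_simps)
  moreover have "inj L" using \<open>a \<noteq> 0\<close> by (auto simp: L_def inj_on_def prod_eq_iff)
  ultimately have "(sphere 0 1 - {b}) homeomorphic L ` (sphere 0 1 - {b})"
    by (rule linear_homeomorphic_image)
  moreover have "L ` (sphere 0 1 - {b}) = ellipse a - {q}"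
  proof -
    have "L ` sphere 0 1 = ellipse a"
    proof (intro equalityI subsetI)
      fix y assume "y \<in> L ` sphere 0 1"
      then show "y \<in> ellipse a"
        using \<open>a \<noteq> 0\<close> by (auto simp: L_def ellipse_def norm_Pair power_divide power_mult_distrib)
    next
      fix y assume "y \<in> ellipse a"
      then have "(fst y / a, snd y) \<in> sphere 0 1" "y = L (fst y / a, snd y)"
        using \<open>a \<noteq> 0\<close> by (auto simp: L_def ellipse_def norm_Pair power_divide)
      then show "y \<in> L ` sphere 0 1" by blast
    qed
    moreover have "L b = q" using \<open>a \<noteq> 0\<close> by (simp add: L_def b_def)
    ultimately show ?thesis using \<open>inj L\<close> by (simp add: image_set_diff)
  qed
  moreover have "b \<in> sphere 0 1"
    using assms by (auto simp: b_def ellipse_def norm_Pair power_divide)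
  then have "(sphere 0 1 - {b}) homeomorphic {x :: real \<times> real. (0, 1) \<bullet> x = 0}"
    by (rule homeomorphic_punctured_sphere_hyperplane[OF zero_less_one]) (simp add: prod_eq_iff)
  moreover have "{x :: real \<times> real. (0, 1) \<bullet> x = 0} homeomorphic (UNIV :: real set)"
    by (rule homeomorphic_subspaces) (auto simp: subspace_hyperplane dim_hyperplane prod_eq_iff)
  ultimately show ?thesis by (metis homeomorphic_sym homeomorphic_trans)
qed

lemma ellipse_sublevel_contractible:
  assumes "1 < a" and "a^2 \<le> 2" and "c \<in> ellipse a"
    and "\<And>s t. s \<le> t \<Longrightarrow> P t \<Longrightarrow> P s"
  shows "contractible {q \<in> ellipse a. P (dist c q)} \<or> {q \<in> ellipse a. P (dist c q)} = ellipse a"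
proof -
  obtain Q z where "unimodal_loop Q (dist c) (ellipse a) pi z"
    using ellipse_dist_unimodal[OF assms(1-3)] by metis
  then interpret unimodal_loop Q "dist c" "ellipse a" pi z .
  have line: "(ellipse a - {Q z}) homeomorphic (UNIV :: real set)"
    using \<open>1 < a\<close> Q_in_S[of z] peak by (intro punctured_ellipse_homeomorphic_line) auto
  have "{q \<in> ellipse a. P (dist c q)} = ellipse a \<or>
      connected {q \<in> ellipse a. P (dist c q)} \<and> Q z \<notin> {q \<in> ellipse a. P (dist c q)}"
    by (rule sublevel_connected) (use assms(4) in blast)
  then show ?thesis
  proof
    assume "connected {q \<in> ellipse a. P (dist c q)} \<and> Q z \<notin> {q \<in> ellipse a. P (dist c q)}"
    then have "contractible {q \<in> ellipse a. P (dist c q)}"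
      by (intro contractible_if_connected_in_line[OF line]) auto
    then show ?thesis ..
  qed (rule disjI2)
qed

theorem mainTheorem15:
  fixes a :: real and p :: "real \<times> real"
  assumes "1 < a" and "a \<le> sqrt 2" and "p \<in> ellipse a"
  shows "(\<forall>q\<in>ellipse a. local_min_on (ellipse a) (dist p) q \<longleftrightarrow> q = p)
       \<and> (\<forall>q\<in>ellipse a. local_max_on (ellipse a) (dist p) q \<longleftrightarrow> q = ell_hinv a p)
       \<and> (\<forall>q\<in>ellipse a. dist p p \<le> dist p q \<and> dist p q \<le> dist p (ell_hinv a p))
       \<and> (\<forall>c\<in>ellipse a. \<forall>r. ellipse a \<inter> ball c r \<noteq> {} \<longrightarrow>
            contractible (ellipse a \<inter> ball c r) \<or> ellipse a \<inter> ball c r = ellipse a)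
       \<and> (\<forall>c\<in>ellipse a. \<forall>r. ellipse a \<inter> cball c r \<noteq> {} \<longrightarrow>
            contractible (ellipse a \<inter> cball c r) \<or> ellipse a \<inter> cball c r = ellipse a)"
proof -
  have "a^2 \<le> 2"
    using power_mono[OF \<open>a \<le> sqrt 2\<close>, of 2] \<open>1 < a\<close> by simp
  obtain Q z where loop: "unimodal_loop Q (dist p) (ellipse a) pi z" and "Q 0 = p"
    and normal: "\<And>v. 0 < v \<Longrightarrow> v < pi \<Longrightarrow> p \<in> normal_line a (Q v) \<longleftrightarrow> v = z"
    by (rule ellipse_dist_unimodal[OF \<open>1 < a\<close> \<open>a^2 \<le> 2\<close> \<open>p \<in> ellipse a\<close>]) blast
  interpret unimodal_loop Q "dist p" "ellipse a" pi z by (fact loop)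
  have "a \<noteq> 0" using \<open>1 < a\<close> by simp
  from ell_hinv_eq_peak[OF this loop \<open>Q 0 = p\<close> normal] have hinv: "ell_hinv a p = Q z" .
  show ?thesis
  proof (intro conjI ballI allI impI)
    show "local_min_on (ellipse a) (dist p) q \<longleftrightarrow> q = p" if "q \<in> ellipse a" for q
      using local_min_on_iff[OF that] \<open>Q 0 = p\<close> by simp
    show "local_max_on (ellipse a) (dist p) q \<longleftrightarrow> q = ell_hinv a p" if "q \<in> ellipse a" for q
      using local_max_on_iff[OF that] hinv by simp
    show "dist p p \<le> dist p q" "dist p q \<le> dist p (ell_hinv a p)" if "q \<in> ellipse a" for q
      using le_peak[OF that] hinv by simp_all
    show "contractible (ellipse a \<inter> ball c r) \<or> ellipse a \<inter> ball c r = ellipse a"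
      if "c \<in> ellipse a" for c r
      using ellipse_sublevel_contractible[OF \<open>1 < a\<close> \<open>a^2 \<le> 2\<close> that, of "\<lambda>t. t < r"]
      by (simp add: ball_def Int_def)
    show "contractible (ellipse a \<inter> cball c r) \<or> ellipse a \<inter> cball c r = ellipse a"
      if "c \<in> ellipse a" for c r
      using ellipse_sublevel_contractible[OF \<open>1 < a\<close> \<open>a^2 \<le> 2\<close> that, of "\<lambda>t. t \<le> r"]
      by (simp add: cball_def Int_def)
  qed
qed

end
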